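(* Let $\mathscr{A}$ be a nonempty closed set of games with $\mathscr{A}\neq\{0\}$ whose misère quotient $(\mathcal{Q},\mathcal{P})=\mathcal{Q}(\mathscr{A})$ is finite, and let $\mathcal{K}$ be the kernel of $\mathcal{Q}$. Then $\mathcal{K}\cap\mathcal{P}\neq\emptyset$.
   Context: Games are finite, loopfree impartial games identified with the finite set of their options ($0=\{\}$); disjunctive sum $G+H=\{G'+H\}\cup\{G+H'\}$. Misère outcome: $o^-(G)=\mathscr{P}$ iff $G\neq0$ and every option has outcome $\mathscr{N}$; otherwise $\mathscr{N}$. A set of games is closed if it contains all options of its members and is closed under $+$. For closed $\mathscr{A}$: $G\equiv_\mathscr{A}H$ iff $o^-(G+X)=o^-(H+X)$ for all $X\in\mathscr{A}$; $\mathcal{Q}(\mathscr{A})=(\mathcal{Q},\mathcal{P})$ is the commutative monoid of $\equiv_\mathscr{A}$-classes ($[G][H]=[G+H]$) with $\mathcal{P}$ the set of classes of misère $\mathscr{P}$-positions. For a finite commutative monoid $\mathcal{Q}$, let $z$ be the product of all idempotents ($x^2=x$) of $\mathcal{Q}$; the kernel is $\mathcal{K}=\{x\in\mathcal{Q}: x\mid z\text{ and } z\mid x\}$, where $x\mid y$ means $xw=y$ for some $w\in\mathcal{Q}$. *)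

theory Defs
  imports "HOL-Library.FSet" "HOL-Algebra.Divisibility" "HOL-Algebra.FiniteProduct"
begin

text \<open>Finite loopfree impartial games, identified with the finite set of their options
  (nested datatype over finite sets, so equality is extensional).\<close>
datatype game = Game (opts: "game fset")

abbreviation zero_game :: game where "zero_game \<equiv> Game {||}"

lemma size_opt_less: "x |\<in>| A \<Longrightarrow> size x < size (Game A)"
proof -
  assume h: "x |\<in>| A"
  have "Suc (size x) \<le> (\<Sum>y\<in>fset A. Suc (size y))"
    using h by (intro member_le_sum[where f="\<lambda>y. Suc (size y)"]) auto
  then show ?thesis by (simp add: size_fset_simps)
qed

function gplus :: "game \<Rightarrow> game \<Rightarrow> game" where
  "gplus (Game A) (Game B) =
     Game ((\<lambda>a. gplus a (Game B)) |`| A |\<union>| (\<lambda>b. gplus (Game A) b) |`| B)"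
  by (metis game.exhaust prod.exhaust) auto
termination
  by (relation "measure (\<lambda>(g, h). size g + size h)") (auto dest: size_opt_less)

text \<open>Misere outcome: \<open>isP G\<close> iff \<open>o\<^sup>-(G) = P\<close> (otherwise the outcome is N).\<close>
function isP :: "game \<Rightarrow> bool" where
  "isP (Game A) = (A \<noteq> {||} \<and> (\<forall>a. a |\<in>| A \<longrightarrow> \<not> isP a))"
  by (metis game.exhaust) auto
termination
  by (relation "measure size") (auto dest: size_opt_less)

definition closed_set :: "game set \<Rightarrow> bool" where
  "closed_set \<A> \<longleftrightarrow>
     (\<forall>G\<in>\<A>. \<forall>G'. G' |\<in>| opts G \<longrightarrow> G' \<in> \<A>) \<and>
     (\<forall>G\<in>\<A>. \<forall>H\<in>\<A>. gplus G H \<in> \<A>)"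

definition misere_eqrel :: "game set \<Rightarrow> (game \<times> game) set" where
  "misere_eqrel \<A> =
     {(G, H). G \<in> \<A> \<and> H \<in> \<A> \<and> (\<forall>X\<in>\<A>. isP (gplus G X) = isP (gplus H X))}"

definition misere_quotient :: "game set \<Rightarrow> game set monoid" where
  "misere_quotient \<A> =
     \<lparr> carrier = \<A> // misere_eqrel \<A>,
       mult = (\<lambda>X Y. misere_eqrel \<A> `` {gplus (SOME G. G \<in> X) (SOME H. H \<in> Y)}),
       one = misere_eqrel \<A> `` {zero_game} \<rparr>"

definition P_classes :: "game set \<Rightarrow> game set set" where
  "P_classes \<A> = {misere_eqrel \<A> `` {G} | G. G \<in> \<A> \<and> isP G}"

definition idempotents :: "('a, 'b) monoid_scheme \<Rightarrow> 'a set" where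
  "idempotents M = {x \<in> carrier M. x \<otimes>\<^bsub>M\<^esub> x = x}"

definition monoid_kernel :: "('a, 'b) monoid_scheme \<Rightarrow> 'a set" where
  "monoid_kernel M =
     (let z = finprod M id (idempotents M)
      in {x \<in> carrier M. x divides\<^bsub>M\<^esub> z \<and> z divides\<^bsub>M\<^esub> x})"

end

theory Submission
  imports Defs
begin

text \<open>Let \<open>z\<close> be the product of the idempotents of the finite quotient. Some power of any
  \<open>x\<close> is idempotent and is absorbed by \<open>z\<close>, so \<open>zx\<close> divides \<open>z\<close>: every multiple of \<open>z\<close> lies in
  the kernel. It therefore suffices to find, for a representative \<open>G\<^sub>0\<close> of \<open>z\<close>, some \<open>H \<in> \<A>\<close>
  with \<open>G\<^sub>0 + H\<close> a misere P-position. If \<open>G\<^sub>0 = 0\<close>, take \<open>H = *\<close>, which lies in \<open>\<A>\<close> because \<open>\<A>\<close>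
  contains a nonzero game and is closed under options. Otherwise, if no \<open>G\<^sub>0 + H\<close> were a
  P-position, then every option \<open>G\<^sub>0' + G\<^sub>0\<close> of \<open>G\<^sub>0 + G\<^sub>0\<close> would be an N-position, making
  \<open>G\<^sub>0 + G\<^sub>0\<close> itself a P-position.\<close>

lemma game_eqI: "opts G = opts H \<Longrightarrow> G = H"
  by (cases G; cases H) simp

lemma opts_gplus:
  "opts (gplus G H) = (\<lambda>a. gplus a H) |`| opts G |\<union>| (\<lambda>b. gplus G b) |`| opts H"
  by (cases G; cases H) simp

lemma isP_iff: "isP G \<longleftrightarrow> opts G \<noteq> {||} \<and> (\<forall>a. a |\<in>| opts G \<longrightarrow> \<not> isP a)"
  by (cases G) simp

lemma size_opts_less: "a |\<in>| opts G \<Longrightarrow> size a < size G"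
  by (metis game.collapse size_opt_less)

lemma gplus_commute: "gplus G H = gplus H G"
proof (induction G H rule: gplus.induct)
  case (1 A B)
  have "(\<lambda>a. gplus a (Game B)) |`| A = (\<lambda>a. gplus (Game B) a) |`| A"
    by (rule fimage_cong) (auto intro: 1(1))
  moreover have "(\<lambda>b. gplus (Game A) b) |`| B = (\<lambda>b. gplus b (Game A)) |`| B"
    by (rule fimage_cong) (auto intro: 1(2))
  ultimately show ?case
    by (simp only: gplus.simps funion_commute)
qed

lemma gplus_zero_right [simp]: "gplus G zero_game = G"
  by (induction G) (auto intro: game_eqI simp: opts_gplus fimage_ident)

lemma gplus_zero_left [simp]: "gplus zero_game G = G"
  by (simp add: gplus_commute)

lemma gplus_assoc: "gplus (gplus G H) K = gplus G (gplus H K)"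
proof (induction "size G + size H + size K" arbitrary: G H K rule: less_induct)
  case less
  have "(\<lambda>a. gplus (gplus a H) K) |`| opts G = (\<lambda>a. gplus a (gplus H K)) |`| opts G"
    and "(\<lambda>b. gplus (gplus G b) K) |`| opts H = (\<lambda>b. gplus G (gplus b K)) |`| opts H"
    and "(\<lambda>c. gplus (gplus G H) c) |`| opts K = (\<lambda>c. gplus G (gplus H c)) |`| opts K"
    by (auto intro!: fimage_cong less dest: size_opts_less)
  then show ?case
    by (intro game_eqI) (simp add: opts_gplus fimage_funion fset.map_comp o_def funion_assoc)
qed

lemma closed_set_opts: "closed_set \<A> \<Longrightarrow> G \<in> \<A> \<Longrightarrow> a |\<in>| opts G \<Longrightarrow> a \<in> \<A>"
  unfolding closed_set_def by blast

lemma closed_set_gplus: "closed_set \<A> \<Longrightarrow> G \<in> \<A> \<Longrightarrow> H \<in> \<A> \<Longrightarrow> gplus G H \<in> \<A>"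
  unfolding closed_set_def by blast

lemma closed_set_zero_game:
  assumes "closed_set \<A>" and "G \<in> \<A>"
  shows "zero_game \<in> \<A>"
  using assms(2)
proof (induction G)
  case (Game S)
  show ?case
  proof (cases "S = {||}")
    case False
    then obtain a where "a |\<in>| S"
      by blast
    then show ?thesis
      using Game closed_set_opts[OF assms(1), of "Game S" a] by auto
  qed (use Game.prems in simp)
qed

lemma closed_set_star:
  assumes "closed_set \<A>" and "G \<in> \<A>" and "G \<noteq> zero_game"
  shows "Game {|zero_game|} \<in> \<A>"
  using assms(2,3)
proof (induction G)
  case (Game S)
  show ?case
  proof (cases "\<exists>a. a |\<in>| S \<and> a \<noteq> zero_game")
    case True
    then show ?thesis
      using Game closed_set_opts[OF assms(1), of "Game S"] by auto
  next
    case False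
    then have "S = {|zero_game|}"
      using Game.prems by auto
    then show ?thesis
      using Game.prems by simp
  qed
qed

lemma closed_set_ex_isP_gplus:
  assumes closed: "closed_set \<A>" and "G \<in> \<A>" and "\<A> \<noteq> {zero_game}"
  shows "\<exists>H\<in>\<A>. isP (gplus G H)"
proof (rule ccontr)
  assume no_P: "\<not> (\<exists>H\<in>\<A>. isP (gplus G H))"
  have "opts G = {||}"
  proof (rule ccontr)
    assume "opts G \<noteq> {||}"
    then have "opts (gplus G G) \<noteq> {||}"
      by (simp add: opts_gplus)
    moreover have "\<not> isP a" if a: "a |\<in>| opts (gplus G G)" for a
    proof -
      obtain b where "b |\<in>| opts G" and "a = gplus b G \<or> a = gplus G b"
        using a unfolding opts_gplus by auto
      then show ?thesis
        using no_P closed_set_opts[OF closed \<open>G \<in> \<A>\<close>] by (metis gplus_commute)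
    qed
    ultimately have "isP (gplus G G)"
      unfolding isP_iff[of "gplus G G"] by blast
    then show False
      using no_P \<open>G \<in> \<A>\<close> by blast
  qed
  then have "G = zero_game"
    by (metis game.collapse)
  obtain G' where "G' \<in> \<A>" and "G' \<noteq> zero_game"
    using \<open>G \<in> \<A>\<close> assms(3) by blast
  then have "Game {|zero_game|} \<in> \<A>"
    using closed_set_star[OF closed] by blast
  moreover have "isP (Game {|zero_game|})"
    by simp
  ultimately show False
    using no_P \<open>G = zero_game\<close> by auto
qed

lemma equiv_misere_eqrel: "equiv \<A> (misere_eqrel \<A>)"
  unfolding equiv_def refl_on_def sym_def trans_def misere_eqrel_def by auto

lemma misere_eqrel_gplus_left:
  assumes "closed_set \<A>" and "(G, G') \<in> misere_eqrel \<A>" and "H \<in> \<A>"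
  shows "(gplus G H, gplus G' H) \<in> misere_eqrel \<A>"
  using assms closed_set_gplus[OF assms(1)]
  unfolding misere_eqrel_def by (auto simp: gplus_assoc)

lemma misere_eqrel_gplus:
  assumes "closed_set \<A>" and "(G, G') \<in> misere_eqrel \<A>" and "(H, H') \<in> misere_eqrel \<A>"
  shows "(gplus G H, gplus G' H') \<in> misere_eqrel \<A>"
proof -
  have "H \<in> \<A>" and "G' \<in> \<A>"
    using assms(2,3) unfolding misere_eqrel_def by auto
  then have "(gplus G H, gplus G' H) \<in> misere_eqrel \<A>"
    and "(gplus G' H, gplus G' H') \<in> misere_eqrel \<A>"
    using misere_eqrel_gplus_left[OF assms(1)] assms(2,3) by (metis gplus_commute)+
  then show ?thesis
    using equiv_misere_eqrel[of \<A>] by (meson equiv_def transD)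
qed

lemma carrier_misere_quotient: "carrier (misere_quotient \<A>) = \<A> // misere_eqrel \<A>"
  by (simp add: misere_quotient_def)

lemma one_misere_quotient: "\<one>\<^bsub>misere_quotient \<A>\<^esub> = misere_eqrel \<A> `` {zero_game}"
  by (simp add: misere_quotient_def)

lemma mult_misere_quotient:
  assumes "closed_set \<A>" and "G \<in> \<A>" and "H \<in> \<A>"
  shows "misere_eqrel \<A> `` {G} \<otimes>\<^bsub>misere_quotient \<A>\<^esub> misere_eqrel \<A> `` {H}
    = misere_eqrel \<A> `` {gplus G H}"
proof -
  let ?R = "misere_eqrel \<A>"
  have "G \<in> ?R `` {G}" and "H \<in> ?R `` {H}"
    using assms(2,3) equiv_class_self[OF equiv_misere_eqrel] by auto
  then have "(G, SOME G'. G' \<in> ?R `` {G}) \<in> ?R" and "(H, SOME H'. H' \<in> ?R `` {H}) \<in> ?R"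
    by (metis Image_singleton_iff someI)+
  then have "(gplus G H, gplus (SOME G'. G' \<in> ?R `` {G}) (SOME H'. H' \<in> ?R `` {H})) \<in> ?R"
    using misere_eqrel_gplus[OF assms(1)] by blast
  then show ?thesis
    using equiv_class_eq[OF equiv_misere_eqrel] by (simp add: misere_quotient_def)
qed

lemma comm_monoid_misere_quotient:
  assumes closed: "closed_set \<A>" and "\<A> \<noteq> {}"
  shows "comm_monoid (misere_quotient \<A>)"
proof -
  let ?R = "misere_eqrel \<A>" and ?Q = "misere_quotient \<A>"
  have zero: "zero_game \<in> \<A>"
    using assms closed_set_zero_game by blast
  have class_mem: "?R `` {G} \<in> carrier ?Q" if "G \<in> \<A>" for G
    using that by (simp add: carrier_misere_quotient quotientI)
  have classE: "(\<And>G. G \<in> \<A> \<Longrightarrow> x = ?R `` {G} \<Longrightarrow> P) \<Longrightarrow> P" if "x \<in> carrier ?Q" for x P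
    using that by (metis carrier_misere_quotient quotientE)
  note mult = mult_misere_quotient[OF closed] closed_set_gplus[OF closed]
  show ?thesis
  proof (rule comm_monoidI)
    fix x y assume "x \<in> carrier ?Q" "y \<in> carrier ?Q"
    then show "x \<otimes>\<^bsub>?Q\<^esub> y \<in> carrier ?Q"
      by (elim classE) (simp add: mult class_mem)
  next
    show "\<one>\<^bsub>?Q\<^esub> \<in> carrier ?Q"
      using class_mem zero by (simp add: one_misere_quotient)
  next
    fix x y w assume "x \<in> carrier ?Q" "y \<in> carrier ?Q" "w \<in> carrier ?Q"
    then show "x \<otimes>\<^bsub>?Q\<^esub> y \<otimes>\<^bsub>?Q\<^esub> w = x \<otimes>\<^bsub>?Q\<^esub> (y \<otimes>\<^bsub>?Q\<^esub> w)"
      by (elim classE) (simp add: mult gplus_assoc)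
  next
    fix x assume "x \<in> carrier ?Q"
    then show "\<one>\<^bsub>?Q\<^esub> \<otimes>\<^bsub>?Q\<^esub> x = x"
      by (elim classE) (simp add: one_misere_quotient mult zero)
  next
    fix x y assume "x \<in> carrier ?Q" "y \<in> carrier ?Q"
    then show "x \<otimes>\<^bsub>?Q\<^esub> y = y \<otimes>\<^bsub>?Q\<^esub> x"
      by (elim classE) (simp add: mult gplus_commute)
  qed
qed

lemma class_mem_P_classes: "G \<in> \<A> \<Longrightarrow> isP G \<Longrightarrow> misere_eqrel \<A> `` {G} \<in> P_classes \<A>"
  unfolding P_classes_def by blast

lemma (in monoid) nat_pow_eventually_periodic:
  fixes a p k t :: nat
  assumes "x \<in> carrier G" and "x [^] a = x [^] (a + p)" and "a \<le> k"
  shows "x [^] (k + t * p) = x [^] k"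
proof (induction t)
  case (Suc t)
  have "x [^] (k + Suc t * p) = x [^] (k - a) \<otimes> x [^] (a + p) \<otimes> x [^] (t * p)"
    using assms(1,3) by (simp add: nat_pow_mult algebra_simps)
  also have "\<dots> = x [^] (k + t * p)"
    using assms by (simp add: nat_pow_mult m_assoc flip: assms(2))
  finally show ?case
    using Suc by simp
qed simp

lemma (in monoid) ex_idempotent_nat_pow:
  assumes "finite (carrier G)" and x: "x \<in> carrier G"
  shows "\<exists>m::nat \<ge> 1. x [^] m \<in> idempotents G"
proof -
  have "\<not> inj (\<lambda>k. x [^] Suc k)"
    using assms finite_subset[of "range (\<lambda>k. x [^] Suc k)" "carrier G"]
    by (auto dest: finite_imageD)
  then obtain i j where "i < j" and "x [^] Suc i = x [^] Suc j"
    unfolding inj_def by (metis linorder_neqE_nat)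
  then have period: "x [^] Suc i = x [^] (Suc i + (j - i))"
    by simp
  \<comment> \<open>a multiple of the period \<open>j - i\<close> beyond the preperiod \<open>Suc i\<close>\<close>
  define m where "m = Suc i * (j - i)"
  have "Suc i * 1 \<le> Suc i * (j - i)"
    using \<open>i < j\<close> by (intro mult_le_mono2) simp
  then have "Suc i \<le> m"
    unfolding m_def by simp
  have "x [^] m \<otimes> x [^] m = x [^] (m + Suc i * (j - i))"
    using x by (simp add: nat_pow_mult m_def)
  also have "\<dots> = x [^] m"
    by (rule nat_pow_eventually_periodic[OF x period \<open>Suc i \<le> m\<close>])
  finally show ?thesis
    using x \<open>i < j\<close> by (intro exI[of _ m]) (simp add: m_def idempotents_def)
qed

lemma (in comm_monoid) finprod_idempotents_closed: "finprod G id (idempotents G) \<in> carrier G"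
  by (rule finprod_closed) (auto simp: idempotents_def)

lemma (in comm_monoid) finprod_idempotents_absorb:
  assumes "finite (carrier G)" and e: "e \<in> idempotents G"
  shows "finprod G id (idempotents G) \<otimes> e = finprod G id (idempotents G)"
proof -
  let ?E = "idempotents G - {e}"
  have e_carrier: "e \<in> carrier G" and "e \<otimes> e = e"
    using e by (auto simp: idempotents_def)
  have "finite (idempotents G)"
    using assms(1) finite_subset by (auto simp: idempotents_def)
  then have "finprod G id (idempotents G) = e \<otimes> finprod G id ?E"
    using e e_carrier finprod_insert[of ?E e id]
    by (auto simp: insert_absorb idempotents_def)
  moreover have "finprod G id ?E \<in> carrier G"
    by (rule finprod_closed) (auto simp: idempotents_def)
  ultimately show ?thesis
    using e_carrier \<open>e \<otimes> e = e\<close> by (metis m_assoc m_comm)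
qed

lemma (in comm_monoid) finprod_idempotents_mult_mem_kernel:
  assumes fin: "finite (carrier G)" and x: "x \<in> carrier G"
  shows "finprod G id (idempotents G) \<otimes> x \<in> monoid_kernel G"
proof -
  define z where "z = finprod G id (idempotents G)"
  have z: "z \<in> carrier G"
    unfolding z_def by (rule finprod_idempotents_closed)
  obtain m :: nat where "m \<ge> 1" and "x [^] m \<in> idempotents G"
    using ex_idempotent_nat_pow[OF fin x] by blast
  then have "z = z \<otimes> (x \<otimes> x [^] (m - 1))"
    using finprod_idempotents_absorb[OF fin] x
    by (metis z_def Suc_diff_le diff_Suc_1 nat_pow_Suc2)
  then have "(z \<otimes> x) divides z"
    using x z by (intro dividesI[of "x [^] (m - 1)"]) (simp_all add: m_assoc)
  moreover have "z divides (z \<otimes> x)"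
    using x by (rule dividesI) simp
  ultimately show ?thesis
    using x z by (simp add: monoid_kernel_def Let_def z_def)
qed

theorem mainTheorem20:
  fixes \<A> :: "game set"
  assumes "\<A> \<noteq> {}"
    and "closed_set \<A>"
    and "\<A> \<noteq> {zero_game}"
    and "finite (carrier (misere_quotient \<A>))"
  shows "monoid_kernel (misere_quotient \<A>) \<inter> P_classes \<A> \<noteq> {}"
proof -
  let ?Q = "misere_quotient \<A>" and ?R = "misere_eqrel \<A>"
  interpret Q: comm_monoid ?Q
    using comm_monoid_misere_quotient assms(1,2) by blast
  define z where "z = finprod ?Q id (idempotents ?Q)"
  obtain G where G: "G \<in> \<A>" and z: "z = ?R `` {G}"
    using Q.finprod_idempotents_closed
    by (metis z_def carrier_misere_quotient quotientE)
  obtain H where H: "H \<in> \<A>" and P: "isP (gplus G H)"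
    using closed_set_ex_isP_gplus assms(2,3) G by blast
  have "?R `` {gplus G H} = z \<otimes>\<^bsub>?Q\<^esub> ?R `` {H}"
    using mult_misere_quotient assms(2) G H z by simp
  also have "\<dots> \<in> monoid_kernel ?Q"
    unfolding z_def using H assms(4)
    by (intro Q.finprod_idempotents_mult_mem_kernel) (simp_all add: carrier_misere_quotient quotientI)
  finally show ?thesis
    using class_mem_P_classes closed_set_gplus assms(2) G H P by blast
qed

end
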